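(* Let $\mathcal{A}$ be an additive category and $\mathrm{Ex}(\mathcal{A})$ the set of all exact structures on $\mathcal{A}$, partially ordered by inclusion. Then $(\mathrm{Ex}(\mathcal{A}),\subseteq)$ is a lattice, with meet $\mathcal{E}\wedge\mathcal{E}'=\mathcal{E}\cap\mathcal{E}'$ and join $\mathcal{E}\vee\mathcal{E}'=\bigcap\{\mathcal{E}''\in\mathrm{Ex}(\mathcal{A}) : \mathcal{E}\subseteq\mathcal{E}'',\ \mathcal{E}'\subseteq\mathcal{E}''\}$.
   Context: An exact structure (in the sense of Quillen) on an additive category $\mathcal{A}$ is a class $\mathcal{E}$ of kernel–cokernel pairs $(i,d)$, closed under isomorphisms, such that: identities are admissible monics and admissible epics; admissible monics are closed under composition, and so are admissible epics; the pushout of an admissible monic along an arbitrary morphism exists and is an admissible monic; the pullback of an admissible epic along an arbitrary morphism exists and is an admissible epic. Here an admissible monic is a morphism $i$ with $(i,d)\in\mathcal{E}$ for some $d$, and an admissible epic dually. It is known (and may be used) that every additive category admits a unique maximal exact structure $\mathcal{E}_{max}$ (containing all exact structures) and a unique minimal one $\mathcal{E}_{min}$, consisting of the split exact sequences. *)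

theory Defs
  imports Main
begin

section \<open>Additive categories (single-sorted presentation)\<close>

text \<open>A category is given by a set of objects, a set of morphisms with domain and
codomain maps, composition (cmp g f = g after f) and identities.\<close>

record ('o, 'm) addcat =
  Ob  :: "'o set"
  Mor :: "'m set"
  dom :: "'m \<Rightarrow> 'o"
  cod :: "'m \<Rightarrow> 'o"
  cmp :: "'m \<Rightarrow> 'm \<Rightarrow> 'm"
  idm :: "'o \<Rightarrow> 'm"
  add :: "'m \<Rightarrow> 'm \<Rightarrow> 'm"
  zer :: "'o \<Rightarrow> 'o \<Rightarrow> 'm"
  neg :: "'m \<Rightarrow> 'm"

definition hom :: "('o, 'm) addcat \<Rightarrow> 'o \<Rightarrow> 'o \<Rightarrow> 'm set" where
  "hom C a b = {f \<in> Mor C. dom C f = a \<and> cod C f = b}"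

definition is_category :: "('o, 'm) addcat \<Rightarrow> bool" where
  "is_category C \<longleftrightarrow>
     (\<forall>f \<in> Mor C. dom C f \<in> Ob C \<and> cod C f \<in> Ob C) \<and>
     (\<forall>a \<in> Ob C. idm C a \<in> hom C a a) \<and>
     (\<forall>a \<in> Ob C. \<forall>b \<in> Ob C. \<forall>c \<in> Ob C. \<forall>f \<in> hom C a b. \<forall>g \<in> hom C b c.
        cmp C g f \<in> hom C a c) \<and>
     (\<forall>a \<in> Ob C. \<forall>b \<in> Ob C. \<forall>c \<in> Ob C. \<forall>d \<in> Ob C.
        \<forall>f \<in> hom C a b. \<forall>g \<in> hom C b c. \<forall>h \<in> hom C c d.
        cmp C h (cmp C g f) = cmp C (cmp C h g) f) \<and>
     (\<forall>a \<in> Ob C. \<forall>b \<in> Ob C. \<forall>f \<in> hom C a b.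
        cmp C f (idm C a) = f \<and> cmp C (idm C b) f = f)"

definition is_preadditive :: "('o, 'm) addcat \<Rightarrow> bool" where
  "is_preadditive C \<longleftrightarrow> is_category C \<and>
     (\<forall>a \<in> Ob C. \<forall>b \<in> Ob C.
        zer C a b \<in> hom C a b \<and>
        (\<forall>f \<in> hom C a b. \<forall>g \<in> hom C a b. add C f g \<in> hom C a b) \<and>
        (\<forall>f \<in> hom C a b. neg C f \<in> hom C a b) \<and>
        (\<forall>f \<in> hom C a b. \<forall>g \<in> hom C a b. \<forall>h \<in> hom C a b.
           add C (add C f g) h = add C f (add C g h)) \<and>
        (\<forall>f \<in> hom C a b. \<forall>g \<in> hom C a b. add C f g = add C g f) \<and>
        (\<forall>f \<in> hom C a b. add C (zer C a b) f = f) \<and>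
        (\<forall>f \<in> hom C a b. add C (neg C f) f = zer C a b)) \<and>
     (\<forall>a \<in> Ob C. \<forall>b \<in> Ob C. \<forall>c \<in> Ob C.
        (\<forall>f \<in> hom C a b. \<forall>g1 \<in> hom C b c. \<forall>g2 \<in> hom C b c.
           cmp C (add C g1 g2) f = add C (cmp C g1 f) (cmp C g2 f)) \<and>
        (\<forall>f1 \<in> hom C a b. \<forall>f2 \<in> hom C a b. \<forall>g \<in> hom C b c.
           cmp C g (add C f1 f2) = add C (cmp C g f1) (cmp C g f2)))"

definition is_additive :: "('o, 'm) addcat \<Rightarrow> bool" where
  "is_additive C \<longleftrightarrow> is_preadditive C \<and>
     (\<exists>z \<in> Ob C. idm C z = zer C z z) \<and>
     (\<forall>a \<in> Ob C. \<forall>b \<in> Ob C. \<exists>c \<in> Ob C.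
        \<exists>p1 \<in> hom C c a. \<exists>p2 \<in> hom C c b. \<exists>i1 \<in> hom C a c. \<exists>i2 \<in> hom C b c.
          cmp C p1 i1 = idm C a \<and> cmp C p2 i2 = idm C b \<and>
          cmp C p1 i2 = zer C b a \<and> cmp C p2 i1 = zer C a b \<and>
          add C (cmp C i1 p1) (cmp C i2 p2) = idm C c)"

definition is_kernel :: "('o, 'm) addcat \<Rightarrow> 'm \<Rightarrow> 'm \<Rightarrow> bool" where
  "is_kernel C i d \<longleftrightarrow> i \<in> Mor C \<and> d \<in> Mor C \<and> cod C i = dom C d \<and>
     cmp C d i = zer C (dom C i) (cod C d) \<and>
     (\<forall>w \<in> Ob C. \<forall>g \<in> hom C w (dom C d). cmp C d g = zer C w (cod C d) \<longrightarrow>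
        (\<exists>!h. h \<in> hom C w (dom C i) \<and> cmp C i h = g))"

definition is_cokernel :: "('o, 'm) addcat \<Rightarrow> 'm \<Rightarrow> 'm \<Rightarrow> bool" where
  "is_cokernel C d i \<longleftrightarrow> i \<in> Mor C \<and> d \<in> Mor C \<and> cod C i = dom C d \<and>
     cmp C d i = zer C (dom C i) (cod C d) \<and>
     (\<forall>w \<in> Ob C. \<forall>g \<in> hom C (cod C i) w. cmp C g i = zer C (dom C i) w \<longrightarrow>
        (\<exists>!h. h \<in> hom C (cod C d) w \<and> cmp C h d = g))"

definition kc_pair :: "('o, 'm) addcat \<Rightarrow> 'm \<Rightarrow> 'm \<Rightarrow> bool" where
  "kc_pair C i d \<longleftrightarrow> is_kernel C i d \<and> is_cokernel C d i"

definition is_iso :: "('o, 'm) addcat \<Rightarrow> 'm \<Rightarrow> bool" where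
  "is_iso C f \<longleftrightarrow> f \<in> Mor C \<and>
     (\<exists>g \<in> hom C (cod C f) (dom C f).
        cmp C g f = idm C (dom C f) \<and> cmp C f g = idm C (cod C f))"

text \<open>Isomorphism of (short) sequences X --i--> Y --d--> Z.\<close>

definition seq_iso :: "('o, 'm) addcat \<Rightarrow> 'm \<times> 'm \<Rightarrow> 'm \<times> 'm \<Rightarrow> bool" where
  "seq_iso C s s' \<longleftrightarrow> (case s of (i, d) \<Rightarrow> case s' of (i', d') \<Rightarrow>
     (\<exists>a b c. is_iso C a \<and> is_iso C b \<and> is_iso C c \<and>
        a \<in> hom C (dom C i) (dom C i') \<and> b \<in> hom C (cod C i) (cod C i') \<and>
        c \<in> hom C (cod C d) (cod C d') \<and>
        cmp C b i = cmp C i' a \<and> cmp C c d = cmp C d' b))"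

definition adm_monic :: "('o, 'm) addcat \<Rightarrow> ('m \<times> 'm) set \<Rightarrow> 'm \<Rightarrow> bool" where
  "adm_monic C E i \<longleftrightarrow> (\<exists>d. (i, d) \<in> E)"

definition adm_epic :: "('o, 'm) addcat \<Rightarrow> ('m \<times> 'm) set \<Rightarrow> 'm \<Rightarrow> bool" where
  "adm_epic C E d \<longleftrightarrow> (\<exists>i. (i, d) \<in> E)"

definition is_pushout :: "('o, 'm) addcat \<Rightarrow> 'm \<Rightarrow> 'm \<Rightarrow> 'm \<Rightarrow> 'm \<Rightarrow> bool" where
  "is_pushout C i f i' f' \<longleftrightarrow>
     i \<in> Mor C \<and> f \<in> Mor C \<and> i' \<in> Mor C \<and> f' \<in> Mor C \<and>
     dom C f = dom C i \<and> dom C i' = cod C f \<and> dom C f' = cod C i \<and>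
     cod C f' = cod C i' \<and> cmp C f' i = cmp C i' f \<and>
     (\<forall>t \<in> Ob C. \<forall>u \<in> hom C (cod C f) t. \<forall>v \<in> hom C (cod C i) t.
        cmp C u f = cmp C v i \<longrightarrow>
        (\<exists>!w. w \<in> hom C (cod C i') t \<and> cmp C w i' = u \<and> cmp C w f' = v))"

definition is_pullback :: "('o, 'm) addcat \<Rightarrow> 'm \<Rightarrow> 'm \<Rightarrow> 'm \<Rightarrow> 'm \<Rightarrow> bool" where
  "is_pullback C d g d' g' \<longleftrightarrow>
     d \<in> Mor C \<and> g \<in> Mor C \<and> d' \<in> Mor C \<and> g' \<in> Mor C \<and>
     cod C g = cod C d \<and> cod C d' = dom C g \<and> cod C g' = dom C d \<and>
     dom C g' = dom C d' \<and> cmp C d g' = cmp C g d' \<and>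
     (\<forall>t \<in> Ob C. \<forall>u \<in> hom C t (dom C g). \<forall>v \<in> hom C t (dom C d).
        cmp C g u = cmp C d v \<longrightarrow>
        (\<exists>!w. w \<in> hom C t (dom C d') \<and> cmp C d' w = u \<and> cmp C g' w = v))"

definition exact_structure :: "('o, 'm) addcat \<Rightarrow> ('m \<times> 'm) set \<Rightarrow> bool" where
  "exact_structure C E \<longleftrightarrow>
     (\<forall>(i, d) \<in> E. kc_pair C i d) \<and>
     (\<forall>s \<in> E. \<forall>i' d'. kc_pair C i' d' \<and> seq_iso C s (i', d') \<longrightarrow> (i', d') \<in> E) \<and>
     (\<forall>a \<in> Ob C. adm_monic C E (idm C a) \<and> adm_epic C E (idm C a)) \<and>
     (\<forall>i j. adm_monic C E i \<and> adm_monic C E j \<and> cod C i = dom C j \<longrightarrow>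
        adm_monic C E (cmp C j i)) \<and>
     (\<forall>d e. adm_epic C E d \<and> adm_epic C E e \<and> cod C d = dom C e \<longrightarrow>
        adm_epic C E (cmp C e d)) \<and>
     (\<forall>i f. adm_monic C E i \<and> f \<in> Mor C \<and> dom C f = dom C i \<longrightarrow>
        (\<exists>i' f'. is_pushout C i f i' f' \<and> adm_monic C E i')) \<and>
     (\<forall>d g. adm_epic C E d \<and> g \<in> Mor C \<and> cod C g = cod C d \<longrightarrow>
        (\<exists>d' g'. is_pullback C d g d' g' \<and> adm_epic C E d'))"

definition Ex :: "('o, 'm) addcat \<Rightarrow> ('m \<times> 'm) set set" where
  "Ex C = {E. exact_structure C E}"

end

theory Submission imports Defs begin

text \<open>Intersections of nonempty families of exact structures are exact, which gives both the
meet and (since the maximal exact structure makes the family of upper bounds nonempty) the join.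
The only axioms not inherited verbatim by an intersection are those asserting that some witness
exists (a cokernel partner of an admissible monic, an admissible pushout or pullback), because
each member might choose a different witness. But cokernels, kernels, pushouts and pullbacks are
unique up to isomorphism, and exact structures are closed under isomorphic kernel--cokernel pairs,
so the witness chosen in one member is admissible in all of them.\<close>

lemma cokernel_factor:
  assumes "is_cokernel C d i" "w \<in> Ob C" "g \<in> hom C (cod C i) w" "cmp C g i = zer C (dom C i) w"
  shows "\<exists>h \<in> hom C (cod C d) w. cmp C h d = g"
  using assms unfolding is_cokernel_def by blast

lemma kernel_factor:
  assumes "is_kernel C i d" "w \<in> Ob C" "g \<in> hom C w (dom C d)" "cmp C d g = zer C w (cod C d)"
  shows "\<exists>h \<in> hom C w (dom C i). cmp C i h = g"
  using assms unfolding is_kernel_def by blast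

lemma pushout_factor:
  assumes "is_pushout C i f i' f'" "t \<in> Ob C" "u \<in> hom C (cod C f) t" "v \<in> hom C (cod C i) t"
    "cmp C u f = cmp C v i"
  shows "\<exists>!w. w \<in> hom C (cod C i') t \<and> cmp C w i' = u \<and> cmp C w f' = v"
  using assms unfolding is_pushout_def by blast

lemma pullback_factor:
  assumes "is_pullback C d g d' g'" "t \<in> Ob C" "u \<in> hom C t (dom C g)" "v \<in> hom C t (dom C d)"
    "cmp C g u = cmp C d v"
  shows "\<exists>!w. w \<in> hom C t (dom C d') \<and> cmp C d' w = u \<and> cmp C g' w = v"
  using assms unfolding is_pullback_def by blast

lemma exact_structure_kc_pair: "exact_structure C E \<Longrightarrow> (i, d) \<in> E \<Longrightarrow> kc_pair C i d"
  unfolding exact_structure_def by fast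

lemma exact_structure_iso_closed:
  "exact_structure C E \<Longrightarrow> s \<in> E \<Longrightarrow> kc_pair C i' d' \<Longrightarrow> seq_iso C s (i', d') \<Longrightarrow> (i', d') \<in> E"
  unfolding exact_structure_def by fast

lemma exact_structureD:
  assumes "exact_structure C E"
  shows "a \<in> Ob C \<Longrightarrow> adm_monic C E (idm C a)"
    and "a \<in> Ob C \<Longrightarrow> adm_epic C E (idm C a)"
    and "adm_monic C E i \<Longrightarrow> adm_monic C E j \<Longrightarrow> cod C i = dom C j \<Longrightarrow> adm_monic C E (cmp C j i)"
    and "adm_epic C E d \<Longrightarrow> adm_epic C E e \<Longrightarrow> cod C d = dom C e \<Longrightarrow> adm_epic C E (cmp C e d)"
    and "adm_monic C E i \<Longrightarrow> f \<in> Mor C \<Longrightarrow> dom C f = dom C i \<Longrightarrow>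
      \<exists>i' f'. is_pushout C i f i' f' \<and> adm_monic C E i'"
    and "adm_epic C E d \<Longrightarrow> g \<in> Mor C \<Longrightarrow> cod C g = cod C d \<Longrightarrow>
      \<exists>d' g'. is_pullback C d g d' g' \<and> adm_epic C E d'"
  using assms unfolding exact_structure_def by blast+

context
  fixes C :: "('o, 'm) addcat"
  assumes cat: "is_category C"
begin

lemma hom_Ob: "f \<in> hom C a b \<Longrightarrow> a \<in> Ob C \<and> b \<in> Ob C"
  using cat unfolding is_category_def hom_def by blast

lemma idm_in_hom: "a \<in> Ob C \<Longrightarrow> idm C a \<in> hom C a a"
  using cat unfolding is_category_def by blast

lemma cmp_in_hom: "f \<in> hom C a b \<Longrightarrow> g \<in> hom C b c \<Longrightarrow> cmp C g f \<in> hom C a c"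
  using cat hom_Ob unfolding is_category_def by blast

lemma cmp_assoc:
  "f \<in> hom C a b \<Longrightarrow> g \<in> hom C b c \<Longrightarrow> h \<in> hom C c d \<Longrightarrow>
   cmp C h (cmp C g f) = cmp C (cmp C h g) f"
  using cat hom_Ob unfolding is_category_def by blast

lemma cmp_idm_left: "f \<in> hom C a b \<Longrightarrow> cmp C (idm C b) f = f"
  using cat hom_Ob unfolding is_category_def by blast

lemma cmp_idm_right: "f \<in> hom C a b \<Longrightarrow> cmp C f (idm C a) = f"
  using cat hom_Ob unfolding is_category_def by blast

lemma is_iso_idm: "a \<in> Ob C \<Longrightarrow> is_iso C (idm C a)"
  using idm_in_hom cmp_idm_left unfolding is_iso_def hom_def by fastforce

lemma is_isoE:
  assumes "is_iso C p"
  obtains q where "p \<in> hom C (dom C p) (cod C p)" "q \<in> hom C (cod C p) (dom C p)"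
    "cmp C q p = idm C (dom C p)" "cmp C p q = idm C (cod C p)"
  using assms unfolding is_iso_def hom_def by blast

lemma is_isoI:
  "p \<in> hom C a b \<Longrightarrow> q \<in> hom C b a \<Longrightarrow> cmp C q p = idm C a \<Longrightarrow> cmp C p q = idm C b \<Longrightarrow> is_iso C p"
  unfolding is_iso_def hom_def by auto

lemma cokernel_endo_eq_idm:
  assumes d: "is_cokernel C d i" and x: "x \<in> hom C (cod C d) (cod C d)" "cmp C x d = d"
  shows "x = idm C (cod C d)"
proof -
  have d_hom: "d \<in> hom C (cod C i) (cod C d)" and di: "cmp C d i = zer C (dom C i) (cod C d)"
    using d unfolding is_cokernel_def hom_def by auto
  have Z: "cod C d \<in> Ob C" using hom_Ob[OF d_hom] by blast
  have "\<exists>!h. h \<in> hom C (cod C d) (cod C d) \<and> cmp C h d = d"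
    using d Z d_hom di unfolding is_cokernel_def by blast
  then show ?thesis
    using x idm_in_hom[OF Z] cmp_idm_left[OF d_hom] by blast
qed

lemma kernel_endo_eq_idm:
  assumes i: "is_kernel C i d" and x: "x \<in> hom C (dom C i) (dom C i)" "cmp C i x = i"
  shows "x = idm C (dom C i)"
proof -
  have i_hom: "i \<in> hom C (dom C i) (dom C d)" and di: "cmp C d i = zer C (dom C i) (cod C d)"
    using i unfolding is_kernel_def hom_def by auto
  have X: "dom C i \<in> Ob C" using hom_Ob[OF i_hom] by blast
  have "\<exists>!h. h \<in> hom C (dom C i) (dom C i) \<and> cmp C i h = i"
    using i X i_hom di unfolding is_kernel_def by blast
  then show ?thesis
    using x idm_in_hom[OF X] cmp_idm_right[OF i_hom] by blast
qed

lemma cokernel_factor_iso: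
  assumes d: "is_cokernel C d i" and d': "is_cokernel C d' i'"
    and p: "is_iso C p" "dom C p = cod C i" and pi: "cmp C p i = i'"
  shows "\<exists>c \<in> hom C (cod C d) (cod C d'). is_iso C c \<and> cmp C c d = cmp C d' p"
proof -
  obtain q where p_hom: "p \<in> hom C (cod C i) (cod C p)" and q: "q \<in> hom C (cod C p) (cod C i)"
    and qp: "cmp C q p = idm C (cod C i)" and pq: "cmp C p q = idm C (cod C p)"
    using is_isoE[OF p(1)] p(2) by metis
  have i: "i \<in> hom C (dom C i) (cod C i)" and d_hom: "d \<in> hom C (cod C i) (cod C d)"
    and di: "cmp C d i = zer C (dom C i) (cod C d)"
    using d unfolding is_cokernel_def hom_def by auto
  have i'_hom: "i' \<in> hom C (dom C i) (cod C p)"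
    using cmp_in_hom[OF i p_hom] pi by simp
  have d'_hom: "d' \<in> hom C (cod C p) (cod C d')" and d'i': "cmp C d' i' = zer C (dom C i) (cod C d')"
    using d' i'_hom unfolding is_cokernel_def hom_def by auto
  have Z: "cod C d \<in> Ob C" and Z': "cod C d' \<in> Ob C"
    using hom_Ob[OF d_hom] hom_Ob[OF d'_hom] by auto
  have d'p: "cmp C d' p \<in> hom C (cod C i) (cod C d')" and dq: "cmp C d q \<in> hom C (cod C p) (cod C d)"
    using cmp_in_hom p_hom q d_hom d'_hom by blast+
  have "cmp C (cmp C d' p) i = zer C (dom C i) (cod C d')"
    using cmp_assoc[OF i p_hom d'_hom] pi d'i' by simp
  then obtain c where c: "c \<in> hom C (cod C d) (cod C d')" "cmp C c d = cmp C d' p"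
    using cokernel_factor[OF d Z' d'p] by blast
  have "cmp C q i' = i"
    using cmp_assoc[OF i p_hom q] pi qp cmp_idm_left[OF i] by simp
  then have "cmp C (cmp C d q) i' = zer C (dom C i) (cod C d)"
    using cmp_assoc[OF i'_hom q d_hom] di by simp
  moreover have "cod C i' = cod C p" "dom C i' = dom C i"
    using i'_hom unfolding hom_def by auto
  ultimately obtain c' where c': "c' \<in> hom C (cod C d') (cod C d)" "cmp C c' d' = cmp C d q"
    using cokernel_factor[OF d' Z, of "cmp C d q"] dq by auto
  have "cmp C (cmp C c' c) d = cmp C (cmp C c' d') p"
    using cmp_assoc[OF d_hom c(1) c'(1)] cmp_assoc[OF p_hom d'_hom c'(1)] c(2) by simp
  also have "\<dots> = d"
    using cmp_assoc[OF p_hom q d_hom] c'(2) qp cmp_idm_right[OF d_hom] by simp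
  finally have c'c: "cmp C c' c = idm C (cod C d)"
    using cokernel_endo_eq_idm[OF d] cmp_in_hom[OF c(1) c'(1)] by blast
  have "cmp C (cmp C c c') d' = cmp C (cmp C c d) q"
    using cmp_assoc[OF d'_hom c'(1) c(1)] cmp_assoc[OF q d_hom c(1)] c'(2) by simp
  also have "\<dots> = d'"
    using cmp_assoc[OF q p_hom d'_hom] c(2) pq cmp_idm_right[OF d'_hom] by simp
  finally have cc': "cmp C c c' = idm C (cod C d')"
    using cokernel_endo_eq_idm[OF d'] cmp_in_hom[OF c'(1) c(1)] by blast
  show ?thesis
    using c is_isoI[OF c(1) c'(1) c'c cc'] by blast
qed

lemma kernel_factor_iso:
  assumes i: "is_kernel C i d" and i': "is_kernel C i' d'"
    and p: "is_iso C p" "cod C p = dom C d'" and d'p: "cmp C d' p = d"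
  shows "\<exists>a \<in> hom C (dom C i) (dom C i'). is_iso C a \<and> cmp C i' a = cmp C p i"
proof -
  obtain q where p_hom: "p \<in> hom C (dom C p) (dom C d')" and q: "q \<in> hom C (dom C d') (dom C p)"
    and qp: "cmp C q p = idm C (dom C p)" and pq: "cmp C p q = idm C (dom C d')"
    using is_isoE[OF p(1)] p(2) by metis
  have d'_hom: "d' \<in> hom C (dom C d') (cod C d')" and i'_hom: "i' \<in> hom C (dom C i') (dom C d')"
    and d'i': "cmp C d' i' = zer C (dom C i') (cod C d')"
    using i' unfolding is_kernel_def hom_def by auto
  have d_hom: "d \<in> hom C (dom C p) (cod C d')"
    using cmp_in_hom[OF p_hom d'_hom] d'p by simp
  have i_hom: "i \<in> hom C (dom C i) (dom C p)" and di: "cmp C d i = zer C (dom C i) (cod C d')"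
    using i d_hom unfolding is_kernel_def hom_def by auto
  have X: "dom C i \<in> Ob C" and X': "dom C i' \<in> Ob C"
    using hom_Ob[OF i_hom] hom_Ob[OF i'_hom] by auto
  have pi: "cmp C p i \<in> hom C (dom C i) (dom C d')" and qi': "cmp C q i' \<in> hom C (dom C i') (dom C p)"
    using cmp_in_hom p_hom q i_hom i'_hom by blast+
  have "cmp C d' (cmp C p i) = zer C (dom C i) (cod C d')"
    using cmp_assoc[OF i_hom p_hom d'_hom] d'p di by simp
  then obtain a where a: "a \<in> hom C (dom C i) (dom C i')" "cmp C i' a = cmp C p i"
    using kernel_factor[OF i' X pi] by blast
  have "cmp C d q = d'"
    using cmp_assoc[OF q p_hom d'_hom] d'p pq cmp_idm_right[OF d'_hom] by simp
  then have "cmp C d (cmp C q i') = zer C (dom C i') (cod C d)"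
    using cmp_assoc[OF i'_hom q d_hom] d'i' d_hom unfolding hom_def by simp
  moreover have "dom C d = dom C p"
    using d_hom unfolding hom_def by simp
  ultimately obtain a' where a': "a' \<in> hom C (dom C i') (dom C i)" "cmp C i a' = cmp C q i'"
    using kernel_factor[OF i X', of "cmp C q i'"] qi' by auto
  have "cmp C i (cmp C a' a) = cmp C q (cmp C i' a)"
    using cmp_assoc[OF a(1) a'(1) i_hom] cmp_assoc[OF a(1) i'_hom q] a'(2) by simp
  also have "\<dots> = i"
    using cmp_assoc[OF i_hom p_hom q] a(2) qp cmp_idm_left[OF i_hom] by simp
  finally have a'a: "cmp C a' a = idm C (dom C i)"
    using kernel_endo_eq_idm[OF i] cmp_in_hom[OF a(1) a'(1)] by blast
  have "cmp C i' (cmp C a a') = cmp C p (cmp C i a')"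
    using cmp_assoc[OF a'(1) a(1) i'_hom] cmp_assoc[OF a'(1) i_hom p_hom] a(2) by simp
  also have "\<dots> = i'"
    using cmp_assoc[OF i'_hom q p_hom] a'(2) pq cmp_idm_left[OF i'_hom] by simp
  finally have aa': "cmp C a a' = idm C (dom C i')"
    using kernel_endo_eq_idm[OF i'] cmp_in_hom[OF a'(1) a(1)] by blast
  show ?thesis
    using a is_isoI[OF a(1) a'(1) a'a aa'] by blast
qed

lemma exact_structure_mem_if_monic_iso:
  assumes E: "exact_structure C E" and id: "(i, d) \<in> E" and kc: "kc_pair C i' d'"
    and p: "is_iso C p" "dom C p = cod C i" and pi: "cmp C p i = i'"
  shows "(i', d') \<in> E"
proof -
  have "kc_pair C i d" using exact_structure_kc_pair[OF E id] .
  then have i: "i \<in> hom C (dom C i) (cod C i)" and d: "is_cokernel C d i"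
    unfolding kc_pair_def is_kernel_def hom_def by auto
  have p_hom: "p \<in> hom C (cod C i) (cod C p)"
    using p unfolding is_iso_def hom_def by auto
  have i': "i' \<in> hom C (dom C i) (cod C p)"
    using cmp_in_hom[OF i p_hom] pi by simp
  obtain c where c: "c \<in> hom C (cod C d) (cod C d')" "is_iso C c" "cmp C c d = cmp C d' p"
    using cokernel_factor_iso[OF d _ p pi] kc unfolding kc_pair_def by blast
  have X: "dom C i \<in> Ob C" using hom_Ob[OF i] by blast
  have "seq_iso C (i, d) (i', d')"
    unfolding seq_iso_def prod.case
    using is_iso_idm[OF X] idm_in_hom[OF X] p p_hom i' c cmp_idm_right[OF i'] pi
    by (intro exI[of _ "idm C (dom C i)"] exI[of _ p] exI[of _ c]) (auto simp: hom_def)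
  then show ?thesis by (rule exact_structure_iso_closed[OF E id kc])
qed

lemma exact_structure_mem_if_epic_iso:
  assumes E: "exact_structure C E" and id: "(i, d) \<in> E" and kc: "kc_pair C i' d'"
    and p: "is_iso C p" "cod C p = dom C d'" and d'p: "cmp C d' p = d"
  shows "(i', d') \<in> E"
proof -
  have "kc_pair C i d" using exact_structure_kc_pair[OF E id] .
  then have i: "is_kernel C i d" and d: "d \<in> hom C (dom C d) (cod C d)"
    and i_hom: "i \<in> hom C (dom C i) (dom C d)"
    unfolding kc_pair_def is_kernel_def hom_def by auto
  have p_hom: "p \<in> hom C (dom C p) (dom C d')" and d': "d' \<in> hom C (dom C d') (cod C d')"
    and i': "i' \<in> hom C (dom C i') (dom C d')"
    using p kc unfolding is_iso_def kc_pair_def is_kernel_def hom_def by auto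
  have d_hom: "d \<in> hom C (dom C p) (cod C d')"
    using cmp_in_hom[OF p_hom d'] d'p by simp
  obtain a where a: "a \<in> hom C (dom C i) (dom C i')" "is_iso C a" "cmp C i' a = cmp C p i"
    using kernel_factor_iso[OF i _ p d'p] kc unfolding kc_pair_def by blast
  have Z: "cod C d \<in> Ob C" using hom_Ob[OF d] by blast
  have "seq_iso C (i, d) (i', d')"
    unfolding seq_iso_def prod.case
    using is_iso_idm[OF Z] idm_in_hom[OF Z] p p_hom a d_hom cmp_idm_left[OF d] d'p i_hom i'
    by (intro exI[of _ a] exI[of _ p] exI[of _ "idm C (cod C d)"]) (auto simp: hom_def)
  then show ?thesis by (rule exact_structure_iso_closed[OF E id kc])
qed

lemma pushout_unique_iso:
  assumes P1: "is_pushout C i f i1 f1" and P2: "is_pushout C i f i2 f2"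
  shows "\<exists>p \<in> hom C (cod C i2) (cod C i1). is_iso C p \<and> cmp C p i2 = i1"
proof -
  have i1: "i1 \<in> hom C (cod C f) (cod C i1)" and f1: "f1 \<in> hom C (cod C i) (cod C i1)"
    and sq1: "cmp C i1 f = cmp C f1 i"
    using P1 unfolding is_pushout_def hom_def by auto
  have i2: "i2 \<in> hom C (cod C f) (cod C i2)" and f2: "f2 \<in> hom C (cod C i) (cod C i2)"
    and sq2: "cmp C i2 f = cmp C f2 i"
    using P2 unfolding is_pushout_def hom_def by auto
  have T1: "cod C i1 \<in> Ob C" and T2: "cod C i2 \<in> Ob C"
    using hom_Ob[OF i1] hom_Ob[OF i2] by auto
  obtain p where p: "p \<in> hom C (cod C i2) (cod C i1)" "cmp C p i2 = i1" "cmp C p f2 = f1"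
    using pushout_factor[OF P2 T1 i1 f1 sq1] by blast
  obtain q where q: "q \<in> hom C (cod C i1) (cod C i2)" "cmp C q i1 = i2" "cmp C q f1 = f2"
    using pushout_factor[OF P1 T2 i2 f2 sq2] by blast
  have "cmp C (cmp C q p) i2 = i2" "cmp C (cmp C q p) f2 = f2"
    using cmp_assoc[OF i2 p(1) q(1)] cmp_assoc[OF f2 p(1) q(1)] p q by simp_all
  then have "cmp C q p = idm C (cod C i2)"
    using pushout_factor[OF P2 T2 i2 f2 sq2] cmp_in_hom[OF p(1) q(1)] idm_in_hom[OF T2]
      cmp_idm_left[OF i2] cmp_idm_left[OF f2] by blast
  moreover have "cmp C (cmp C p q) i1 = i1" "cmp C (cmp C p q) f1 = f1"
    using cmp_assoc[OF i1 q(1) p(1)] cmp_assoc[OF f1 q(1) p(1)] p q by simp_all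
  then have "cmp C p q = idm C (cod C i1)"
    using pushout_factor[OF P1 T1 i1 f1 sq1] cmp_in_hom[OF q(1) p(1)] idm_in_hom[OF T1]
      cmp_idm_left[OF i1] cmp_idm_left[OF f1] by blast
  ultimately show ?thesis
    using p is_isoI[OF p(1) q(1)] by blast
qed

lemma pullback_unique_iso:
  assumes P1: "is_pullback C d g d1 g1" and P2: "is_pullback C d g d2 g2"
  shows "\<exists>p \<in> hom C (dom C d2) (dom C d1). is_iso C p \<and> cmp C d1 p = d2"
proof -
  have d1: "d1 \<in> hom C (dom C d1) (dom C g)" and g1: "g1 \<in> hom C (dom C d1) (dom C d)"
    and sq1: "cmp C g d1 = cmp C d g1"
    using P1 unfolding is_pullback_def hom_def by auto
  have d2: "d2 \<in> hom C (dom C d2) (dom C g)" and g2: "g2 \<in> hom C (dom C d2) (dom C d)"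
    and sq2: "cmp C g d2 = cmp C d g2"
    using P2 unfolding is_pullback_def hom_def by auto
  have T1: "dom C d1 \<in> Ob C" and T2: "dom C d2 \<in> Ob C"
    using hom_Ob[OF d1] hom_Ob[OF d2] by auto
  obtain p where p: "p \<in> hom C (dom C d2) (dom C d1)" "cmp C d1 p = d2" "cmp C g1 p = g2"
    using pullback_factor[OF P1 T2 d2 g2 sq2] by blast
  obtain q where q: "q \<in> hom C (dom C d1) (dom C d2)" "cmp C d2 q = d1" "cmp C g2 q = g1"
    using pullback_factor[OF P2 T1 d1 g1 sq1] by blast
  have "cmp C d2 (cmp C q p) = d2" "cmp C g2 (cmp C q p) = g2"
    using cmp_assoc[OF p(1) q(1) d2] cmp_assoc[OF p(1) q(1) g2] p q by simp_all
  then have "cmp C q p = idm C (dom C d2)"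
    using pullback_factor[OF P2 T2 d2 g2 sq2] cmp_in_hom[OF p(1) q(1)] idm_in_hom[OF T2]
      cmp_idm_right[OF d2] cmp_idm_right[OF g2] by blast
  moreover have "cmp C d1 (cmp C p q) = d1" "cmp C g1 (cmp C p q) = g1"
    using cmp_assoc[OF q(1) p(1) d1] cmp_assoc[OF q(1) p(1) g1] p q by simp_all
  then have "cmp C p q = idm C (dom C d1)"
    using pullback_factor[OF P1 T1 d1 g1 sq1] cmp_in_hom[OF q(1) p(1)] idm_in_hom[OF T1]
      cmp_idm_right[OF d1] cmp_idm_right[OF g1] by blast
  ultimately show ?thesis
    using p is_isoI[OF p(1) q(1)] by blast
qed

lemma adm_monic_Inter:
  assumes F0: "F0 \<in> FF" and ex: "\<forall>F \<in> FF. exact_structure C F"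
    and adm: "\<forall>F \<in> FF. adm_monic C F i"
  shows "adm_monic C (\<Inter>FF) i"
proof -
  obtain d0 where d0: "(i, d0) \<in> F0" using adm F0 unfolding adm_monic_def by blast
  have kc: "kc_pair C i d0" using exact_structure_kc_pair[OF bspec[OF ex F0] d0] .
  then have i: "i \<in> hom C (dom C i) (cod C i)"
    unfolding kc_pair_def is_kernel_def hom_def by auto
  then have Y: "cod C i \<in> Ob C" using hom_Ob by blast
  then have dom_idm: "dom C (idm C (cod C i)) = cod C i"
    using idm_in_hom unfolding hom_def by blast
  have "(i, d0) \<in> F" if F: "F \<in> FF" for F
  proof -
    obtain d where "(i, d) \<in> F" using adm F unfolding adm_monic_def by blast
    with F ex show ?thesis
      using exact_structure_mem_if_monic_iso[OF _ _ kc is_iso_idm[OF Y] dom_idm cmp_idm_left[OF i]]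
      by blast
  qed
  then show ?thesis unfolding adm_monic_def by blast
qed

lemma adm_epic_Inter:
  assumes F0: "F0 \<in> FF" and ex: "\<forall>F \<in> FF. exact_structure C F"
    and adm: "\<forall>F \<in> FF. adm_epic C F d"
  shows "adm_epic C (\<Inter>FF) d"
proof -
  obtain i0 where i0: "(i0, d) \<in> F0" using adm F0 unfolding adm_epic_def by blast
  have kc: "kc_pair C i0 d" using exact_structure_kc_pair[OF bspec[OF ex F0] i0] .
  then have d: "d \<in> hom C (dom C d) (cod C d)"
    unfolding kc_pair_def is_kernel_def hom_def by auto
  then have Y: "dom C d \<in> Ob C" using hom_Ob by blast
  then have cod_idm: "cod C (idm C (dom C d)) = dom C d"
    using idm_in_hom unfolding hom_def by blast
  have "(i0, d) \<in> F" if F: "F \<in> FF" for F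
  proof -
    obtain i where "(i, d) \<in> F" using adm F unfolding adm_epic_def by blast
    with F ex show ?thesis
      using exact_structure_mem_if_epic_iso[OF _ _ kc is_iso_idm[OF Y] cod_idm cmp_idm_right[OF d]]
      by blast
  qed
  then show ?thesis unfolding adm_epic_def by blast
qed

lemma adm_monic_pushout:
  assumes E: "exact_structure C E" and P1: "is_pushout C i f i1 f1" and P2: "is_pushout C i f i2 f2"
    and adm: "adm_monic C E i2" and kc: "kc_pair C i1 d1"
  shows "adm_monic C E i1"
proof -
  obtain d2 where d2: "(i2, d2) \<in> E" using adm unfolding adm_monic_def by blast
  obtain p where p: "p \<in> hom C (cod C i2) (cod C i1)" "is_iso C p" "cmp C p i2 = i1"
    using pushout_unique_iso[OF P1 P2] by blast
  then have "dom C p = cod C i2" unfolding hom_def by blast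
  then have "(i1, d1) \<in> E"
    using exact_structure_mem_if_monic_iso[OF E d2 kc p(2)] p(3) by blast
  then show ?thesis unfolding adm_monic_def by blast
qed

lemma adm_epic_pullback:
  assumes E: "exact_structure C E" and P1: "is_pullback C d g d1 g1" and P2: "is_pullback C d g d2 g2"
    and adm: "adm_epic C E d2" and kc: "kc_pair C k1 d1"
  shows "adm_epic C E d1"
proof -
  obtain k2 where k2: "(k2, d2) \<in> E" using adm unfolding adm_epic_def by blast
  obtain p where p: "p \<in> hom C (dom C d2) (dom C d1)" "is_iso C p" "cmp C d1 p = d2"
    using pullback_unique_iso[OF P1 P2] by blast
  then have "cod C p = dom C d1" unfolding hom_def by blast
  then have "(k1, d1) \<in> E"
    using exact_structure_mem_if_epic_iso[OF E k2 kc p(2)] p(3) by blast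
  then show ?thesis unfolding adm_epic_def by blast
qed

lemma exact_structure_Inter:
  assumes F0: "F0 \<in> FF" and ex: "\<forall>F \<in> FF. exact_structure C F"
  shows "exact_structure C (\<Inter>FF)"
proof -
  have monic: "adm_monic C F i" if "adm_monic C (\<Inter>FF) i" "F \<in> FF" for F i
    using that unfolding adm_monic_def by blast
  have epic: "adm_epic C F d" if "adm_epic C (\<Inter>FF) d" "F \<in> FF" for F d
    using that unfolding adm_epic_def by blast
  note exD = exact_structureD[OF bspec[OF ex]]
  show ?thesis
    unfolding exact_structure_def
  proof (intro conjI allI ballI impI; (elim conjE)?)
    show "case s of (i, d) \<Rightarrow> kc_pair C i d" if "s \<in> \<Inter>FF" for s
      using exact_structure_kc_pair[OF bspec[OF ex F0]] that F0 by (cases s) blast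
    show "(i', d') \<in> \<Inter>FF" if "s \<in> \<Inter>FF" "kc_pair C i' d'" "seq_iso C s (i', d')" for s i' d'
      using exact_structure_iso_closed[OF bspec[OF ex]] that by blast
    fix a assume "a \<in> Ob C"
    then show "adm_monic C (\<Inter>FF) (idm C a)" "adm_epic C (\<Inter>FF) (idm C a)"
      using adm_monic_Inter[OF F0 ex] adm_epic_Inter[OF F0 ex] exD(1,2) by blast+
  next
    fix i j assume "adm_monic C (\<Inter>FF) i" "adm_monic C (\<Inter>FF) j" "cod C i = dom C j"
    then show "adm_monic C (\<Inter>FF) (cmp C j i)"
      using adm_monic_Inter[OF F0 ex] exD(3) monic by blast
  next
    fix d e assume "adm_epic C (\<Inter>FF) d" "adm_epic C (\<Inter>FF) e" "cod C d = dom C e"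
    then show "adm_epic C (\<Inter>FF) (cmp C e d)"
      using adm_epic_Inter[OF F0 ex] exD(4) epic by blast
  next
    fix i f assume i: "adm_monic C (\<Inter>FF) i" and f: "f \<in> Mor C" "dom C f = dom C i"
    obtain i1 f1 where P1: "is_pushout C i f i1 f1" and "adm_monic C F0 i1"
      using exD(5)[OF F0 monic[OF i F0] f] by blast
    then obtain d1 where kc: "kc_pair C i1 d1"
      using exact_structure_kc_pair[OF bspec[OF ex F0]] unfolding adm_monic_def by blast
    have "adm_monic C F i1" if F: "F \<in> FF" for F
    proof -
      obtain i2 f2 where "is_pushout C i f i2 f2" "adm_monic C F i2"
        using exD(5)[OF F monic[OF i F] f] by blast
      then show ?thesis using adm_monic_pushout[OF bspec[OF ex F] P1 _ _ kc] by blast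
    qed
    then show "\<exists>i' f'. is_pushout C i f i' f' \<and> adm_monic C (\<Inter>FF) i'"
      using P1 adm_monic_Inter[OF F0 ex] by blast
  next
    fix d g assume d: "adm_epic C (\<Inter>FF) d" and g: "g \<in> Mor C" "cod C g = cod C d"
    obtain d1 g1 where P1: "is_pullback C d g d1 g1" and "adm_epic C F0 d1"
      using exD(6)[OF F0 epic[OF d F0] g] by blast
    then obtain k1 where kc: "kc_pair C k1 d1"
      using exact_structure_kc_pair[OF bspec[OF ex F0]] unfolding adm_epic_def by blast
    have "adm_epic C F d1" if F: "F \<in> FF" for F
    proof -
      obtain d2 g2 where "is_pullback C d g d2 g2" "adm_epic C F d2"
        using exD(6)[OF F epic[OF d F] g] by blast
      then show ?thesis using adm_epic_pullback[OF bspec[OF ex F] P1 _ _ kc] by blast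
    qed
    then show "\<exists>d' g'. is_pullback C d g d' g' \<and> adm_epic C (\<Inter>FF) d'"
      using P1 adm_epic_Inter[OF F0 ex] by blast
  qed
qed

end

theorem theorem5p3:
  fixes C :: "('o, 'm) addcat" and E E' :: "('m \<times> 'm) set"
  assumes "is_additive C"
    and Emax: "\<exists>Emax \<in> Ex C. \<forall>F \<in> Ex C. F \<subseteq> Emax"
    and "E \<in> Ex C" and "E' \<in> Ex C"
  shows "E \<inter> E' \<in> Ex C \<and> E \<inter> E' \<subseteq> E \<and> E \<inter> E' \<subseteq> E' \<and>
         (\<forall>F \<in> Ex C. F \<subseteq> E \<and> F \<subseteq> E' \<longrightarrow> F \<subseteq> E \<inter> E') \<and>
         \<Inter>{E'' \<in> Ex C. E \<subseteq> E'' \<and> E' \<subseteq> E''} \<in> Ex C \<and>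
         E \<subseteq> \<Inter>{E'' \<in> Ex C. E \<subseteq> E'' \<and> E' \<subseteq> E''} \<and>
         E' \<subseteq> \<Inter>{E'' \<in> Ex C. E \<subseteq> E'' \<and> E' \<subseteq> E''} \<and>
         (\<forall>F \<in> Ex C. E \<subseteq> F \<and> E' \<subseteq> F \<longrightarrow> \<Inter>{E'' \<in> Ex C. E \<subseteq> E'' \<and> E' \<subseteq> E''} \<subseteq> F)"
proof -
  have cat: "is_category C"
    using assms(1) unfolding is_additive_def is_preadditive_def by blast
  have "\<forall>F \<in> {E, E'}. exact_structure C F"
    using assms(3,4) by (simp add: Ex_def)
  then have meet: "E \<inter> E' \<in> Ex C"
    using exact_structure_Inter[OF cat insertI1, of E "{E'}"] by (simp add: Ex_def)
  obtain M where "M \<in> Ex C" "\<forall>F \<in> Ex C. F \<subseteq> M"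
    using Emax by blast
  then have M: "M \<in> {E'' \<in> Ex C. E \<subseteq> E'' \<and> E' \<subseteq> E''}"
    using assms(3,4) by blast
  have "\<forall>F \<in> {E'' \<in> Ex C. E \<subseteq> E'' \<and> E' \<subseteq> E''}. exact_structure C F"
    by (simp add: Ex_def)
  then have "exact_structure C (\<Inter>{E'' \<in> Ex C. E \<subseteq> E'' \<and> E' \<subseteq> E''})"
    by (rule exact_structure_Inter[OF cat M])
  then have join: "\<Inter>{E'' \<in> Ex C. E \<subseteq> E'' \<and> E' \<subseteq> E''} \<in> Ex C"
    by (simp add: Ex_def)
  show ?thesis
    using meet join by (intro conjI) blast+
qed

end
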